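(* Consider problem (III) with $n$ datum shapes $D_i\in\mathbb{R}^{d\times m}$ ($d\in\{2,3\}$), visibility matrices $\Gamma_i$, fixed diagonal $\Lambda$ and fixed $\nu\ge0$, where each warp is either the affine transformation (feature map $\beta(p)=[p^{\top},1]^{\top}$, $\mu_i=0$) or a TPS warp (with $\mu_i\ge0$), and the matrices $\mathcal{B}_i(D_i)\Gamma_i\Gamma_i\mathcal{B}_i(D_i)^{\top}+\mu_iZ_i^{\top}Z_i$ are invertible. If each datum shape is replaced by $D_i'=R_iD_i+t_i\mathbf{1}^{\top}$ for arbitrary (possibly distinct) rotations $R_i$ and translations $t_i$, where for a TPS warp its control centers are transformed by the same $(R_i,t_i)$, then the optimal reference shape $S$ of problem (III) remains the same.
   Context: Problem (III): $$\min_{W_i,\,S\in\mathbb{R}^{d\times m}}\ \sum_{i=1}^n\|W_i^{\top}\mathcal{B}_i(D_i)\Gamma_i-S\Gamma_i\|_F^2+\sum_{i=1}^n\mu_i\|Z_iW_i\|_F^2+\nu\|S\mathbf{1}\|_2^2\quad\text{s.t.}\quad SS^{\top}=\Lambda,$$ where $\Gamma_i$ is diagonal with entries in $\{0,1\}$, $\mathcal{B}_i(D)=[\beta_i(p_1),\dots,\beta_i(p_m)]$ for $D=[p_1,\dots,p_m]$ and $\mathbf{1}\in\mathbb{R}^m$ is the all-ones vector. TPS warp: control centers $c_1,\dots,c_l\in\mathbb{R}^d$, parameter $\lambda$, kernel $\phi(r)=r^2\log(r^2)$ ($d=2$) or $-|r|$ ($d=3$); $K_\lambda$ has diagonal $\lambda$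 and off-diagonal entries $\phi(\|c_j-c_k\|)$; $\tilde{C}=[\tilde{c}_1,\dots,\tilde{c}_l]$, $\tilde{c}_j=[c_j^{\top},1]^{\top}$; $K_\lambda$, $\tilde{C}K_\lambda^{-1}\tilde{C}^{\top}$ invertible; $\bar{\mathcal{E}}_\lambda=K_\lambda^{-1}-K_\lambda^{-1}\tilde{C}^{\top}(\tilde{C}K_\lambda^{-1}\tilde{C}^{\top})^{-1}\tilde{C}K_\lambda^{-1}$ (positive semidefinite in the paper's setting); $\mathcal{E}_\lambda=\begin{bmatrix}\bar{\mathcal{E}}_\lambda\\ (\tilde{C}K_\lambda^{-1}\tilde{C}^{\top})^{-1}\tilde{C}K_\lambda^{-1}\end{bmatrix}$; $\beta(p)=\mathcal{E}_\lambda^{\top}\begin{bmatrix}\phi_p\\ \tilde{p}\end{bmatrix}$, $\phi_p=[\phi(\|p-c_j\|)]_j$, $\tilde{p}=[p^{\top},1]^{\top}$; $Z=\sqrt{\bar{\mathcal{E}}_\lambda}$. *)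

theory Defs
  imports "Jordan_Normal_Form.Determinant" "Jordan_Normal_Form.Gauss_Jordan_Elimination"
begin

(* Matrix inverse (Gauss--Jordan); only used on matrices assumed invertible. *)
definition minv :: "real mat \<Rightarrow> real mat" where
  "minv A = the (mat_inverse A)"

definition vnorm :: "real vec \<Rightarrow> real" where
  "vnorm v = sqrt (v \<bullet> v)"

definition fro2 :: "real mat \<Rightarrow> real" where
  "fro2 A = (\<Sum>i<dim_row A. \<Sum>j<dim_col A. (A $$ (i,j))^2)"

definition psd :: "real mat \<Rightarrow> bool" where
  "psd A \<longleftrightarrow> square_mat A \<and> A\<^sup>T = A \<and>
     (\<forall>x \<in> carrier_vec (dim_row A). 0 \<le> x \<bullet> (A *\<^sub>v x))"

definition tps_kernel :: "nat \<Rightarrow> real \<Rightarrow> real" where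
  "tps_kernel d r = (if d = 2 then r^2 * ln (r^2) else - \<bar>r\<bar>)"

(* A warp: affine, or TPS with control centres given as the columns of a
   d x l matrix C and regularisation parameter lambda. *)
datatype warp = Affine | TPS "real mat" real

definition tps_K :: "nat \<Rightarrow> real mat \<Rightarrow> real \<Rightarrow> real mat" where
  "tps_K d C lam = mat (dim_col C) (dim_col C)
     (\<lambda>(j,k). if j = k then lam else tps_kernel d (vnorm (col C j - col C k)))"

definition tps_Ct :: "nat \<Rightarrow> real mat \<Rightarrow> real mat" where
  "tps_Ct d C = mat (d+1) (dim_col C) (\<lambda>(i,j). if i < d then C $$ (i,j) else 1)"

definition tps_Elow :: "nat \<Rightarrow> real mat \<Rightarrow> real \<Rightarrow> real mat" where
  "tps_Elow d C lam =
     (let Ki = minv (tps_K d C lam); Ct = tps_Ct d C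
      in minv (Ct * Ki * Ct\<^sup>T) * Ct * Ki)"

definition tps_Ebar :: "nat \<Rightarrow> real mat \<Rightarrow> real \<Rightarrow> real mat" where
  "tps_Ebar d C lam =
     (let Ki = minv (tps_K d C lam); Ct = tps_Ct d C
      in Ki - Ki * Ct\<^sup>T * minv (Ct * Ki * Ct\<^sup>T) * Ct * Ki)"

definition tps_E :: "nat \<Rightarrow> real mat \<Rightarrow> real \<Rightarrow> real mat" where
  "tps_E d C lam = tps_Ebar d C lam @\<^sub>r tps_Elow d C lam"

fun featdim :: "nat \<Rightarrow> warp \<Rightarrow> nat" where
  "featdim d Affine = d + 1"
| "featdim d (TPS C lam) = dim_col C"

fun feat :: "nat \<Rightarrow> warp \<Rightarrow> real vec \<Rightarrow> real vec" where
  "feat d Affine p = vec (d+1) (\<lambda>i. if i < d then p $ i else 1)"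
| "feat d (TPS C lam) p =
     (tps_E d C lam)\<^sup>T *\<^sub>v
       (vec (dim_col C) (\<lambda>j. tps_kernel d (vnorm (p - col C j)))
        @\<^sub>v vec (d+1) (\<lambda>i. if i < d then p $ i else 1))"

definition featmat :: "nat \<Rightarrow> warp \<Rightarrow> real mat \<Rightarrow> real mat" where
  "featmat d w D = mat (featdim d w) (dim_col D) (\<lambda>(i,j). feat d w (col D j) $ i)"

definition rigid :: "real mat \<Rightarrow> real vec \<Rightarrow> real mat \<Rightarrow> real mat" where
  "rigid R t D = mat (dim_row R) (dim_col D) (\<lambda>(a,j). (R * D) $$ (a,j) + t $ a)"

fun warp_rigid :: "real mat \<Rightarrow> real vec \<Rightarrow> warp \<Rightarrow> warp" where
  "warp_rigid R t Affine = Affine"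
| "warp_rigid R t (TPS C lam) = TPS (rigid R t C) lam"

definition rotation_mat :: "nat \<Rightarrow> real mat \<Rightarrow> bool" where
  "rotation_mat d R \<longleftrightarrow> R \<in> carrier_mat d d \<and> R\<^sup>T * R = 1\<^sub>m d \<and> det R = 1"

definition cost3 ::
  "nat \<Rightarrow> nat \<Rightarrow> (nat \<Rightarrow> warp) \<Rightarrow> (nat \<Rightarrow> real mat) \<Rightarrow> (nat \<Rightarrow> real mat)
   \<Rightarrow> (nat \<Rightarrow> real) \<Rightarrow> (nat \<Rightarrow> real mat) \<Rightarrow> real
   \<Rightarrow> (nat \<Rightarrow> real mat) \<Rightarrow> real mat \<Rightarrow> real" where
  "cost3 d n w D \<Gamma> \<mu> Z \<nu> W S =
     (\<Sum>i<n. fro2 ((W i)\<^sup>T * featmat d (w i) (D i) * \<Gamma> i - S * \<Gamma> i))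
     + (\<Sum>i<n. \<mu> i * fro2 (Z i * W i))
     + \<nu> * (vnorm (S *\<^sub>v vec (dim_col S) (\<lambda>_. 1)))^2"

definition feasible3 ::
  "nat \<Rightarrow> nat \<Rightarrow> nat \<Rightarrow> (nat \<Rightarrow> warp) \<Rightarrow> real mat \<Rightarrow> (nat \<Rightarrow> real mat) \<Rightarrow> real mat \<Rightarrow> bool" where
  "feasible3 d m n w \<Lambda> W S \<longleftrightarrow>
     (\<forall>i<n. W i \<in> carrier_mat (featdim d (w i)) d) \<and>
     S \<in> carrier_mat d m \<and> S * S\<^sup>T = \<Lambda>"

definition opt_shapes3 ::
  "nat \<Rightarrow> nat \<Rightarrow> nat \<Rightarrow> (nat \<Rightarrow> warp) \<Rightarrow> (nat \<Rightarrow> real mat) \<Rightarrow> (nat \<Rightarrow> real mat)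
   \<Rightarrow> (nat \<Rightarrow> real) \<Rightarrow> (nat \<Rightarrow> real mat) \<Rightarrow> real \<Rightarrow> real mat \<Rightarrow> real mat set" where
  "opt_shapes3 d m n w D \<Gamma> \<mu> Z \<nu> \<Lambda> =
     {S. \<exists>W. feasible3 d m n w \<Lambda> W S \<and>
          (\<forall>W' S'. feasible3 d m n w \<Lambda> W' S' \<longrightarrow>
             cost3 d n w D \<Gamma> \<mu> Z \<nu> W S \<le> cost3 d n w D \<Gamma> \<mu> Z \<nu> W' S')}"

end

theory Submission
  imports Defs
begin

text \<open>
The warp parameters W_i enter problem (III) only through the data matrix W_i^T B_i(D_i) and the
regulariser mu_i |Z_i W_i|_F^2, and the constraint involves S alone. Hence the optimal shapes S stay
the same as soon as, for every i, each value of this pair reachable with the old data is reachable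
with the new data and conversely.

For an affine warp, B(R D + t 1^T) = A B(D) with the invertible matrix A = [R t; 0 1] acting on
homogeneous coordinates, so W_i is traded for A^(-T) W_i (and mu_i = 0). For a TPS warp whose
centres move with the data, K_lambda is unchanged because R is an isometry, and C~ becomes A C~.
Therefore E-bar_lambda is unchanged and the lower block of E_lambda is multiplied by A^(-T), which
cancels the factor A in the homogeneous coordinates of the moved point: the TPS features are
invariant, and Z'^T Z' = E-bar_lambda = Z^T Z leaves the regulariser unchanged.
\<close>

section \<open>Matrix inverses\<close>

lemma invertible_mat_iff_Units:
  fixes A :: "'a::semiring_1 mat"
  assumes A: "A \<in> carrier_mat n n"
  shows "invertible_mat A \<longleftrightarrow> A \<in> Units (ring_mat TYPE('a) n b)"
proof
  assume "invertible_mat A"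
  then obtain B where AB: "A * B = 1\<^sub>m n" and BA: "B * A = 1\<^sub>m (dim_row B)"
    using A unfolding invertible_mat_def inverts_mat_def by auto
  have "dim_row B = n" using arg_cong[OF BA, of dim_col] A by simp
  moreover have "dim_col B = n" using arg_cong[OF AB, of dim_col] by simp
  ultimately show "A \<in> Units (ring_mat TYPE('a) n b)"
    using A AB BA unfolding Units_def ring_mat_simps by (auto simp: ring_mat_def)
next
  assume "A \<in> Units (ring_mat TYPE('a) n b)"
  then show "invertible_mat A"
    using A unfolding Units_def invertible_mat_def inverts_mat_def by (auto simp: ring_mat_def)
qed

lemma minv_inverse:
  fixes A :: "real mat"
  assumes A: "A \<in> carrier_mat n n" and inv: "invertible_mat A"
  shows "minv A \<in> carrier_mat n n" "A * minv A = 1\<^sub>m n" "minv A * A = 1\<^sub>m n"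
proof -
  obtain B where "mat_inverse A = Some B"
    using mat_inverse(1)[OF A] inv invertible_mat_iff_Units[OF A] by (metis not_Some_eq)
  then show "minv A \<in> carrier_mat n n" "A * minv A = 1\<^sub>m n" "minv A * A = 1\<^sub>m n"
    using mat_inverse(2)[OF A] unfolding minv_def by auto
qed

lemma invertible_mat_if_det_nonzero:
  fixes A :: "real mat"
  assumes "A \<in> carrier_mat n n" and "det A \<noteq> 0"
  shows "invertible_mat A"
  using det_non_zero_imp_unit[OF assms, of undefined] invertible_mat_iff_Units[OF assms(1), of undefined]
  by blast

lemma minv_eqI:
  fixes A B :: "real mat"
  assumes A: "A \<in> carrier_mat n n" and B: "B \<in> carrier_mat n n" and BA: "B * A = 1\<^sub>m n"
  shows "minv A = B"
proof -
  have "det B * det A = 1" using arg_cong[OF BA, of det] by (simp add: det_mult[OF B A])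
  then have "invertible_mat A" using A by (intro invertible_mat_if_det_nonzero) auto
  note Ai = minv_inverse[OF A this]
  have "B = B * (A * minv A)" using B Ai(2) by simp
  also have "\<dots> = (B * A) * minv A" using A B Ai(1) by simp
  also have "\<dots> = minv A" using BA Ai(1) by simp
  finally show ?thesis by simp
qed

lemma assoc_mult_mat_dims:
  "dim_col A = dim_row B \<Longrightarrow> dim_col B = dim_row C \<Longrightarrow> A * B * C = A * (B * C)"
  by (rule assoc_mult_mat[of _ "dim_row A" "dim_col A" _ "dim_col B" _ "dim_col C"]) auto

lemma minv_congruence:
  fixes A M :: "real mat"
  assumes M: "M \<in> carrier_mat n n" "invertible_mat M"
    and A: "A \<in> carrier_mat n n" "invertible_mat A"
  shows "minv (A * M * A\<^sup>T) = (minv A)\<^sup>T * minv M * minv A"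
proof (rule minv_eqI)
  note Ai = minv_inverse[OF A] and Mi = minv_inverse[OF M]
  note dims = carrier_matD[OF A(1)] carrier_matD[OF M(1)]
    carrier_matD[OF Ai(1)] carrier_matD[OF Mi(1)]
  have "(minv A)\<^sup>T * minv M * minv A * (A * M * A\<^sup>T)
      = (minv A)\<^sup>T * (minv M * ((minv A * A) * M) * A\<^sup>T)"
    by (simp add: assoc_mult_mat_dims dims)
  also have "\<dots> = (minv A)\<^sup>T * A\<^sup>T"
    using Ai Mi M A by simp
  also have "\<dots> = (A * minv A)\<^sup>T"
    using transpose_mult[OF A(1) Ai(1)] by simp
  finally show "(minv A)\<^sup>T * minv M * minv A * (A * M * A\<^sup>T) = 1\<^sub>m n"
    using Ai by simp
qed (use assms minv_inverse[OF A] minv_inverse[OF M] in auto)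

lemma change_of_basis_cancel:
  fixes A Ai Ct Ki Mi :: "real mat"
  assumes A: "A \<in> carrier_mat e e" and Ai: "Ai \<in> carrier_mat e e" "Ai * A = 1\<^sub>m e"
    and Ct: "Ct \<in> carrier_mat e l" and Ki: "Ki \<in> carrier_mat l l" and Mi: "Mi \<in> carrier_mat e e"
  shows "Ki * (A * Ct)\<^sup>T * (Ai\<^sup>T * Mi * Ai) * (A * Ct) * Ki = Ki * Ct\<^sup>T * Mi * Ct * Ki"
    and "Ai\<^sup>T * Mi * Ai * (A * Ct) * Ki = Ai\<^sup>T * (Mi * Ct * Ki)"
proof -
  note dims = carrier_matD[OF A] carrier_matD[OF Ai(1)] carrier_matD[OF Ct] carrier_matD[OF Ki]
    carrier_matD[OF Mi]
  have AT_AiT: "A\<^sup>T * Ai\<^sup>T = 1\<^sub>m e"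
    using transpose_mult[OF Ai(1) A] Ai(2) by simp
  have "Ki * (A * Ct)\<^sup>T * (Ai\<^sup>T * Mi * Ai) * (A * Ct) * Ki
      = Ki * Ct\<^sup>T * ((A\<^sup>T * Ai\<^sup>T) * Mi * (Ai * A)) * Ct * Ki"
    using transpose_mult[OF A Ct] by (simp add: assoc_mult_mat_dims dims)
  also have "\<dots> = Ki * Ct\<^sup>T * Mi * Ct * Ki"
    using AT_AiT Ai(2) Mi by simp
  finally show "Ki * (A * Ct)\<^sup>T * (Ai\<^sup>T * Mi * Ai) * (A * Ct) * Ki = Ki * Ct\<^sup>T * Mi * Ct * Ki" .
  have "Ai\<^sup>T * Mi * Ai * (A * Ct) * Ki = Ai\<^sup>T * (Mi * ((Ai * A) * Ct) * Ki)"
    by (simp add: assoc_mult_mat_dims dims)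
  also have "\<dots> = Ai\<^sup>T * (Mi * Ct * Ki)"
    using Ai(2) Ct by simp
  finally show "Ai\<^sup>T * Mi * Ai * (A * Ct) * Ki = Ai\<^sup>T * (Mi * Ct * Ki)" .
qed

lemma transpose_append_rows_mult_vec:
  assumes X: "X \<in> carrier_mat a c" and Y: "Y \<in> carrier_mat b c"
    and u: "u \<in> carrier_vec a" and v: "v \<in> carrier_vec b"
  shows "(X @\<^sub>r Y)\<^sup>T *\<^sub>v (u @\<^sub>v v) = X\<^sup>T *\<^sub>v u + Y\<^sup>T *\<^sub>v v"
proof (rule eq_vecI)
  fix i assume "i < dim_vec (X\<^sup>T *\<^sub>v u + Y\<^sup>T *\<^sub>v v)"
  then have i: "i < c" using Y by simp
  have col: "col (X @\<^sub>r Y) i = col X i @\<^sub>v col Y i"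
    unfolding append_rows_def using X Y i
    by (subst col_four_block_mat(1)[of _ a c _ 0 _ b]) auto
  have "((X @\<^sub>r Y)\<^sup>T *\<^sub>v (u @\<^sub>v v)) $ i = col (X @\<^sub>r Y) i \<bullet> (u @\<^sub>v v)"
    using carrier_append_rows[OF X Y] i by simp
  also have "\<dots> = col X i \<bullet> u + col Y i \<bullet> v"
    unfolding col by (rule scalar_prod_append) (use X Y u v i in auto)
  also have "\<dots> = (X\<^sup>T *\<^sub>v u + Y\<^sup>T *\<^sub>v v) $ i" using X Y i by simp
  finally show "((X @\<^sub>r Y)\<^sup>T *\<^sub>v (u @\<^sub>v v)) $ i = (X\<^sup>T *\<^sub>v u + Y\<^sup>T *\<^sub>v v) $ i" .
qed (use carrier_matD[OF X] carrier_matD[OF Y] carrier_matD[OF carrier_append_rows[OF X Y]] in auto)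

section \<open>Orthogonal matrices and Frobenius norms\<close>

lemma det_nonzero_if_orthogonal:
  fixes R :: "real mat"
  assumes R: "R \<in> carrier_mat d d" and orth: "R\<^sup>T * R = 1\<^sub>m d"
  shows "det R \<noteq> 0"
proof -
  have "det R * det R = 1"
    using arg_cong[OF orth, of det] by (simp add: det_mult[of _ d] det_transpose[OF R] R)
  then show ?thesis by auto
qed

lemma scalar_prod_mult_vec_self:
  fixes M :: "real mat"
  assumes M: "M \<in> carrier_mat k l" and w: "w \<in> carrier_vec l"
  shows "(M *\<^sub>v w) \<bullet> (M *\<^sub>v w) = ((M\<^sup>T * M) *\<^sub>v w) \<bullet> w"
proof -
  have "(M *\<^sub>v w) \<bullet> (M *\<^sub>v w) = (M\<^sup>T *\<^sub>v (M *\<^sub>v w)) \<bullet> w"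
    using M w by (intro transpose_vec_mult_scalar[symmetric]) auto
  also have "\<dots> = ((M\<^sup>T * M) *\<^sub>v w) \<bullet> w"
    using M w by (simp add: assoc_mult_mat_vec[of _ l k])
  finally show ?thesis .
qed

lemma vnorm_orthogonal:
  assumes R: "R \<in> carrier_mat d d" and orth: "R\<^sup>T * R = 1\<^sub>m d" and x: "x \<in> carrier_vec d"
  shows "vnorm (R *\<^sub>v x) = vnorm x"
  unfolding vnorm_def scalar_prod_mult_vec_self[OF R x] orth using x by simp

lemma fro2_cols: "fro2 X = (\<Sum>j<dim_col X. col X j \<bullet> col X j)"
proof -
  have "fro2 X = (\<Sum>j<dim_col X. \<Sum>i<dim_row X. (X $$ (i,j))^2)"
    unfolding fro2_def by (rule sum.swap)
  also have "\<dots> = (\<Sum>j<dim_col X. col X j \<bullet> col X j)"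
    by (rule sum.cong[OF refl]) (simp add: scalar_prod_def atLeast0LessThan power2_eq_square)
  finally show ?thesis .
qed

lemma fro2_mult_eq_if_gram_eq:
  fixes X Y W :: "real mat"
  assumes X: "X \<in> carrier_mat k l" and Y: "Y \<in> carrier_mat k' l" and W: "W \<in> carrier_mat l c"
    and gram: "X\<^sup>T * X = Y\<^sup>T * Y"
  shows "fro2 (X * W) = fro2 (Y * W)"
proof -
  have "col (X * W) j \<bullet> col (X * W) j = col (Y * W) j \<bullet> col (Y * W) j" if j: "j < c" for j
    using col_mult2[OF X W j] col_mult2[OF Y W j] W j
    by (simp add: scalar_prod_mult_vec_self[OF X] scalar_prod_mult_vec_self[OF Y] gram)
  then show ?thesis
    unfolding fro2_cols using X Y W by simp
qed

lemma psd_square_root_gram: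
  assumes P: "psd Z" and ZZ: "Z * Z = E" and E: "E \<in> carrier_mat l l"
  shows "Z \<in> carrier_mat l l" "Z\<^sup>T * Z = E"
proof -
  have "dim_row Z = l" using arg_cong[OF ZZ, of dim_row] E by simp
  moreover have "dim_col Z = dim_row Z" using P unfolding psd_def by simp
  ultimately show "Z \<in> carrier_mat l l" by (intro carrier_matI) simp_all
  show "Z\<^sup>T * Z = E" using P ZZ unfolding psd_def by simp
qed

section \<open>Rigid motions in homogeneous coordinates\<close>

definition homog :: "nat \<Rightarrow> real vec \<Rightarrow> real vec" where
  "homog d p = vec (d+1) (\<lambda>i. if i < d then p $ i else 1)"

definition homog_mat :: "nat \<Rightarrow> real mat \<Rightarrow> real vec \<Rightarrow> real mat" where
  "homog_mat d R t = four_block_mat R (mat d 1 (\<lambda>(i,_). t $ i)) (0\<^sub>m 1 d) (1\<^sub>m 1)"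

lemma homog_carrier [simp]: "homog d p \<in> carrier_vec (d+1)"
  unfolding homog_def by simp

lemma homog_append: "p \<in> carrier_vec d \<Longrightarrow> homog d p = p @\<^sub>v vec 1 (\<lambda>_. 1)"
  unfolding homog_def by (intro eq_vecI) auto

lemma homog_mat_carrier: "R \<in> carrier_mat d d \<Longrightarrow> homog_mat d R t \<in> carrier_mat (d+1) (d+1)"
  unfolding homog_mat_def by (rule four_block_carrier_mat) auto

lemma det_homog_mat: "R \<in> carrier_mat d d \<Longrightarrow> det (homog_mat d R t) = det R"
  unfolding homog_mat_def by (subst det_four_block_mat_lower_left_zero[of _ d _ 1]) auto

lemma invertible_homog_mat:
  "R \<in> carrier_mat d d \<Longrightarrow> det R \<noteq> 0 \<Longrightarrow> invertible_mat (homog_mat d R t)"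
  by (rule invertible_mat_if_det_nonzero[OF homog_mat_carrier]) (simp_all add: det_homog_mat)

lemma minv_homog_mat:
  assumes "R \<in> carrier_mat d d" and "det R \<noteq> 0"
  shows "minv (homog_mat d R t) \<in> carrier_mat (d+1) (d+1)"
    and "minv (homog_mat d R t) * homog_mat d R t = 1\<^sub>m (d+1)"
  using minv_inverse[OF homog_mat_carrier[OF assms(1)] invertible_homog_mat[OF assms]] by blast+

lemma homog_mat_mult_homog:
  assumes R: "R \<in> carrier_mat d d" and t: "t \<in> carrier_vec d" and p: "p \<in> carrier_vec d"
  shows "homog_mat d R t *\<^sub>v homog d p = homog d (R *\<^sub>v p + t)"
proof -
  have T: "mat d 1 (\<lambda>(i,_). t $ i) *\<^sub>v vec 1 (\<lambda>_. 1) = t"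
    using t by (intro eq_vecI) (auto simp: scalar_prod_def row_def)
  have "homog_mat d R t *\<^sub>v homog d p = (R *\<^sub>v p + mat d 1 (\<lambda>(i,_). t $ i) *\<^sub>v vec 1 (\<lambda>_. 1)) @\<^sub>v
        (0\<^sub>m 1 d *\<^sub>v p + 1\<^sub>m 1 *\<^sub>v vec 1 (\<lambda>_. 1))"
    unfolding homog_mat_def homog_append[OF p]
    by (rule four_block_mat_mult_vec[OF R _ _ _ p]) auto
  also have "\<dots> = (R *\<^sub>v p + t) @\<^sub>v vec 1 (\<lambda>_. 1)"
    unfolding T using p by auto
  also have "\<dots> = homog d (R *\<^sub>v p + t)"
    by (rule homog_append[symmetric]) (use R t p in auto)
  finally show ?thesis .
qed

lemma rigid_carrier: "R \<in> carrier_mat d d \<Longrightarrow> D \<in> carrier_mat d m \<Longrightarrow> rigid R t D \<in> carrier_mat d m"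
  unfolding rigid_def by auto

lemma col_rigid:
  assumes "R \<in> carrier_mat d d" "D \<in> carrier_mat d m" "t \<in> carrier_vec d" "j < m"
  shows "col (rigid R t D) j = R *\<^sub>v col D j + t"
  using assms unfolding rigid_def by (intro eq_vecI) auto

lemma rigid_image_diff:
  fixes R :: "real mat"
  assumes R: "R \<in> carrier_mat d d" and "t \<in> carrier_vec d" "p \<in> carrier_vec d" "q \<in> carrier_vec d"
  shows "(R *\<^sub>v p + t) - (R *\<^sub>v q + t) = R *\<^sub>v (p - q)"
  using assms by (auto simp: mult_minus_distrib_mat_vec[OF R] intro!: eq_vecI)

lemma featmat_dims [simp]:
  "dim_row (featmat d w D) = featdim d w" "dim_col (featmat d w D) = dim_col D"
  unfolding featmat_def by simp_all

lemma featmat_carrier [simp]: "featmat d w D \<in> carrier_mat (featdim d w) (dim_col D)"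
  by (rule carrier_matI) simp_all

lemma tps_Ct_carrier: "tps_Ct d C \<in> carrier_mat (d+1) (dim_col C)"
  unfolding tps_Ct_def by simp

lemma col_tps_Ct: "C \<in> carrier_mat d l \<Longrightarrow> j < l \<Longrightarrow> col (tps_Ct d C) j = homog d (col C j)"
  unfolding tps_Ct_def homog_def by (intro eq_vecI) auto

lemma tps_Ct_rigid:
  assumes R: "R \<in> carrier_mat d d" and t: "t \<in> carrier_vec d" and C: "C \<in> carrier_mat d l"
  shows "tps_Ct d (rigid R t C) = homog_mat d R t * tps_Ct d C"
proof (rule mat_col_eqI)
  have C': "rigid R t C \<in> carrier_mat d l" by (rule rigid_carrier[OF R C])
  have Ct: "tps_Ct d C \<in> carrier_mat (d+1) l"
    using tps_Ct_carrier[of d C] C by simp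
  fix j assume "j < dim_col (homog_mat d R t * tps_Ct d C)"
  then have j: "j < l" using Ct by simp
  have "col (homog_mat d R t * tps_Ct d C) j = homog_mat d R t *\<^sub>v homog d (col C j)"
    using col_mult2[OF homog_mat_carrier[OF R] Ct j] col_tps_Ct[OF C j] by simp
  also have "\<dots> = homog d (R *\<^sub>v col C j + t)"
    by (rule homog_mat_mult_homog[OF R t]) (use C j in auto)
  also have "\<dots> = col (tps_Ct d (rigid R t C)) j"
    using col_tps_Ct[OF C' j] col_rigid[OF R C t j] by simp
  finally show "col (tps_Ct d (rigid R t C)) j = col (homog_mat d R t * tps_Ct d C) j"
    by (rule sym)
qed (use carrier_matD[OF homog_mat_carrier[OF R, of t]] C in \<open>simp_all add: tps_Ct_def rigid_def\<close>)

lemma featmat_Affine: "D \<in> carrier_mat d m \<Longrightarrow> featmat d Affine D = tps_Ct d D"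
  unfolding featmat_def tps_Ct_def by (intro eq_matI) auto

lemma featmat_Affine_rigid:
  assumes R: "R \<in> carrier_mat d d" and t: "t \<in> carrier_vec d" and D: "D \<in> carrier_mat d m"
  shows "featmat d Affine (rigid R t D) = homog_mat d R t * featmat d Affine D"
  using featmat_Affine[OF rigid_carrier[OF R D]] featmat_Affine[OF D] tps_Ct_rigid[OF R t D]
  by simp

section \<open>Invariance of the thin-plate spline features\<close>

lemma tps_K_rigid:
  assumes R: "R \<in> carrier_mat d d" and orth: "R\<^sup>T * R = 1\<^sub>m d"
    and t: "t \<in> carrier_vec d" and C: "C \<in> carrier_mat d l"
  shows "tps_K d (rigid R t C) lam = tps_K d C lam"
proof -
  have "vnorm (col (rigid R t C) j - col (rigid R t C) k) = vnorm (col C j - col C k)"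
    if "j < l" "k < l" for j k
    using that C
    by (simp add: col_rigid[OF R C t] rigid_image_diff[OF R t] vnorm_orthogonal[OF R orth])
  then show ?thesis
    unfolding tps_K_def using C carrier_matD[OF rigid_carrier[OF R C, of t]] by (intro eq_matI) auto
qed

lemma tps_kernel_vec_rigid:
  assumes R: "R \<in> carrier_mat d d" and orth: "R\<^sup>T * R = 1\<^sub>m d"
    and t: "t \<in> carrier_vec d" and C: "C \<in> carrier_mat d l" and p: "p \<in> carrier_vec d"
  shows "vec (dim_col (rigid R t C)) (\<lambda>j. tps_kernel d (vnorm (R *\<^sub>v p + t - col (rigid R t C) j)))
    = vec (dim_col C) (\<lambda>j. tps_kernel d (vnorm (p - col C j)))"
proof -
  have "vnorm (R *\<^sub>v p + t - col (rigid R t C) j) = vnorm (p - col C j)" if j: "j < l" for j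
    using C j p
    by (simp add: col_rigid[OF R C t j] rigid_image_diff[OF R t] vnorm_orthogonal[OF R orth])
  then show ?thesis
    using C carrier_matD[OF rigid_carrier[OF R C, of t]] by (intro eq_vecI) simp_all
qed

context
  fixes d l :: nat and R C :: "real mat" and t :: "real vec" and lam :: real
  assumes R: "R \<in> carrier_mat d d" and orth: "R\<^sup>T * R = 1\<^sub>m d"
    and t: "t \<in> carrier_vec d" and C: "C \<in> carrier_mat d l"
    and K_inv: "invertible_mat (tps_K d C lam)"
    and gram_inv: "invertible_mat (tps_Ct d C * minv (tps_K d C lam) * (tps_Ct d C)\<^sup>T)"
begin

lemmas homog_mat_inverse =
  minv_homog_mat[OF R det_nonzero_if_orthogonal[OF R orth]]
  invertible_homog_mat[OF R det_nonzero_if_orthogonal[OF R orth]]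

lemma tps_factors_carrier:
  "tps_Ct d C \<in> carrier_mat (d+1) l"
  "minv (tps_K d C lam) \<in> carrier_mat l l"
  "minv (tps_Ct d C * minv (tps_K d C lam) * (tps_Ct d C)\<^sup>T) \<in> carrier_mat (d+1) (d+1)"
proof -
  show Ct: "tps_Ct d C \<in> carrier_mat (d+1) l"
    using tps_Ct_carrier[of d C] C by simp
  have "tps_K d C lam \<in> carrier_mat l l"
    using C unfolding tps_K_def by simp
  then show Ki: "minv (tps_K d C lam) \<in> carrier_mat l l"
    using minv_inverse(1) K_inv by blast
  show "minv (tps_Ct d C * minv (tps_K d C lam) * (tps_Ct d C)\<^sup>T) \<in> carrier_mat (d+1) (d+1)"
    using minv_inverse(1)[OF _ gram_inv] Ct Ki by simp
qed

lemma tps_gram_inverse_rigid: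
  "minv (tps_Ct d (rigid R t C) * minv (tps_K d (rigid R t C) lam) * (tps_Ct d (rigid R t C))\<^sup>T)
   = (minv (homog_mat d R t))\<^sup>T * minv (tps_Ct d C * minv (tps_K d C lam) * (tps_Ct d C)\<^sup>T)
     * minv (homog_mat d R t)"
proof -
  let ?A = "homog_mat d R t" and ?Ct = "tps_Ct d C" and ?Ki = "minv (tps_K d C lam)"
  note A = homog_mat_carrier[OF R, of t]
    and Ct = tps_factors_carrier(1) and Ki = tps_factors_carrier(2)
  note dims = carrier_matD[OF A] carrier_matD[OF Ct] carrier_matD[OF Ki]
  have "tps_Ct d (rigid R t C) * minv (tps_K d (rigid R t C) lam) * (tps_Ct d (rigid R t C))\<^sup>T
      = ?A * (?Ct * ?Ki * ?Ct\<^sup>T) * ?A\<^sup>T"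
    unfolding tps_Ct_rigid[OF R t C] tps_K_rigid[OF R orth t C] transpose_mult[OF A Ct]
    by (simp add: assoc_mult_mat_dims dims)
  moreover have "?Ct * ?Ki * ?Ct\<^sup>T \<in> carrier_mat (d+1) (d+1)"
    using Ct Ki by simp
  ultimately show ?thesis
    using minv_congruence[OF _ gram_inv A homog_mat_inverse(3)] by simp
qed

lemma tps_Ebar_rigid: "tps_Ebar d (rigid R t C) lam = tps_Ebar d C lam"
  unfolding tps_Ebar_def Let_def tps_gram_inverse_rigid
  unfolding tps_Ct_rigid[OF R t C] tps_K_rigid[OF R orth t C]
  using change_of_basis_cancel(1)[OF homog_mat_carrier[OF R] homog_mat_inverse(1,2)
      tps_factors_carrier]
  by simp

lemma tps_Elow_rigid: "tps_Elow d (rigid R t C) lam = (minv (homog_mat d R t))\<^sup>T * tps_Elow d C lam"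
  unfolding tps_Elow_def Let_def tps_gram_inverse_rigid
  unfolding tps_Ct_rigid[OF R t C] tps_K_rigid[OF R orth t C]
  by (rule change_of_basis_cancel(2)[OF homog_mat_carrier[OF R] homog_mat_inverse(1,2)
      tps_factors_carrier])

lemma tps_Ebar_carrier: "tps_Ebar d C lam \<in> carrier_mat l l"
  unfolding tps_Ebar_def Let_def
  by (meson minus_carrier_mat mult_carrier_mat transpose_carrier_mat tps_factors_carrier)

lemma tps_Elow_carrier: "tps_Elow d C lam \<in> carrier_mat (d+1) l"
  unfolding tps_Elow_def Let_def
  by (meson mult_carrier_mat transpose_carrier_mat tps_factors_carrier)

lemma feat_tps_rigid:
  assumes p: "p \<in> carrier_vec d"
  shows "feat d (TPS (rigid R t C) lam) (R *\<^sub>v p + t) = feat d (TPS C lam) p"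
proof -
  define A Ai Eb El phi where "A = homog_mat d R t" and "Ai = minv (homog_mat d R t)"
    and "Eb = tps_Ebar d C lam" and "El = tps_Elow d C lam"
    and "phi = vec (dim_col C) (\<lambda>j. tps_kernel d (vnorm (p - col C j)))"
  have A: "A \<in> carrier_mat (d+1) (d+1)"
    and Ai: "Ai \<in> carrier_mat (d+1) (d+1)" "Ai * A = 1\<^sub>m (d+1)"
    and Eb: "Eb \<in> carrier_mat l l" and El: "El \<in> carrier_mat (d+1) l"
    and phi: "phi \<in> carrier_vec l"
    unfolding A_def Ai_def Eb_def El_def phi_def
    using homog_mat_carrier[OF R] homog_mat_inverse(1,2) tps_Ebar_carrier tps_Elow_carrier C
    by auto
  have phi_rigid: "vec (dim_col (rigid R t C))
      (\<lambda>j. tps_kernel d (vnorm (R *\<^sub>v p + t - col (rigid R t C) j))) = phi"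
    unfolding phi_def by (rule tps_kernel_vec_rigid[OF R orth t C p])
  have hom_rigid: "homog d (R *\<^sub>v p + t) = A *\<^sub>v homog d p"
    unfolding A_def by (rule homog_mat_mult_homog[OF R t p, symmetric])
  have "feat d (TPS (rigid R t C) lam) (R *\<^sub>v p + t)
      = (Eb @\<^sub>r (Ai\<^sup>T * El))\<^sup>T *\<^sub>v (phi @\<^sub>v (A *\<^sub>v homog d p))"
    unfolding feat.simps tps_E_def homog_def[symmetric]
    unfolding tps_Ebar_rigid tps_Elow_rigid phi_rigid hom_rigid Eb_def El_def Ai_def ..
  also have "\<dots> = Eb\<^sup>T *\<^sub>v phi + (Ai\<^sup>T * El)\<^sup>T *\<^sub>v (A *\<^sub>v homog d p)"
    using A Ai El homog_carrier[of d p] by (intro transpose_append_rows_mult_vec[OF Eb _ phi]) auto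
  also have "(Ai\<^sup>T * El)\<^sup>T *\<^sub>v (A *\<^sub>v homog d p) = El\<^sup>T *\<^sub>v ((Ai * A) *\<^sub>v homog d p)"
    using A Ai(1) El homog_carrier[of d p] by (simp add: transpose_mult[of _ "d+1" "d+1"])
  also have "\<dots> = El\<^sup>T *\<^sub>v homog d p"
    using Ai(2) homog_carrier[of d p] by simp
  also have "Eb\<^sup>T *\<^sub>v phi + El\<^sup>T *\<^sub>v homog d p = (Eb @\<^sub>r El)\<^sup>T *\<^sub>v (phi @\<^sub>v homog d p)"
    by (rule transpose_append_rows_mult_vec[OF Eb El phi homog_carrier, symmetric])
  also have "\<dots> = feat d (TPS C lam) p"
    unfolding feat.simps tps_E_def Eb_def El_def phi_def homog_def ..
  finally show ?thesis .
qed

lemma featmat_tps_rigid: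
  assumes D: "D \<in> carrier_mat d m"
  shows "featmat d (TPS (rigid R t C) lam) (rigid R t D) = featmat d (TPS C lam) D"
proof -
  have "feat d (TPS (rigid R t C) lam) (col (rigid R t D) j) = feat d (TPS C lam) (col D j)"
    if "j < m" for j
    unfolding col_rigid[OF R D t that] by (rule feat_tps_rigid) (use D that in auto)
  then show ?thesis
    unfolding featmat_def
    using C D carrier_matD[OF rigid_carrier[OF R D, of t]] carrier_matD[OF rigid_carrier[OF R C, of t]]
    by (intro eq_matI) (simp_all del: feat.simps)
qed

end

section \<open>Reparametrising problem (III)\<close>

lemma minimiser_components_subset:
  fixes c c' :: "'w \<Rightarrow> 's \<Rightarrow> 'a::preorder"
  assumes there: "\<And>W S. F W S \<Longrightarrow> \<exists>W'. F' W' S \<and> c' W' S = c W S"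
    and back_again: "\<And>W S. F' W S \<Longrightarrow> \<exists>W'. F W' S \<and> c W' S = c' W S"
  shows "{S. \<exists>W. F W S \<and> (\<forall>W2 S2. F W2 S2 \<longrightarrow> c W S \<le> c W2 S2)}
    \<subseteq> {S. \<exists>W. F' W S \<and> (\<forall>W2 S2. F' W2 S2 \<longrightarrow> c' W S \<le> c' W2 S2)}"
proof
  fix S assume "S \<in> {S. \<exists>W. F W S \<and> (\<forall>W2 S2. F W2 S2 \<longrightarrow> c W S \<le> c W2 S2)}"
  then obtain W where W: "F W S" and min: "\<And>W2 S2. F W2 S2 \<Longrightarrow> c W S \<le> c W2 S2" by blast
  obtain W' where W': "F' W' S" "c' W' S = c W S" using there[OF W] by blast
  have "c' W' S \<le> c' W2 S2" if W2: "F' W2 S2" for W2 S2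
  proof -
    obtain W3 where "F W3 S2" "c W3 S2 = c' W2 S2" using back_again[OF W2] by blast
    then show ?thesis using min W'(2) by metis
  qed
  then show "S \<in> {S. \<exists>W. F' W S \<and> (\<forall>W2 S2. F' W2 S2 \<longrightarrow> c' W S \<le> c' W2 S2)}"
    using W'(1) by blast
qed

definition warp_terms_covered ::
  "nat \<Rightarrow> real \<Rightarrow> warp \<Rightarrow> real mat \<Rightarrow> real mat \<Rightarrow> warp \<Rightarrow> real mat \<Rightarrow> real mat \<Rightarrow> bool" where
  "warp_terms_covered d \<mu> w D Z w' D' Z' \<longleftrightarrow>
     (\<forall>W \<in> carrier_mat (featdim d w) d. \<exists>W' \<in> carrier_mat (featdim d w') d.
        W'\<^sup>T * featmat d w' D' = W\<^sup>T * featmat d w D \<and> \<mu> * fro2 (Z' * W') = \<mu> * fro2 (Z * W))"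

lemma warp_terms_covered_featmat_factor:
  assumes B: "B \<in> carrier_mat (featdim d w) (featdim d w')"
    and F: "featmat d w D = B * featmat d w' D'"
  shows "warp_terms_covered d 0 w D Z w' D' Z'"
  unfolding warp_terms_covered_def
proof
  fix W :: "real mat" assume W: "W \<in> carrier_mat (featdim d w) d"
  have "(B\<^sup>T * W)\<^sup>T * featmat d w' D' = W\<^sup>T * (B * featmat d w' D')"
    using transpose_mult[of "B\<^sup>T" _ _ W] B W
    by (simp add: assoc_mult_mat_dims carrier_matD[OF B] carrier_matD[OF W])
  then show "\<exists>W'\<in>carrier_mat (featdim d w') d.
      W'\<^sup>T * featmat d w' D' = W\<^sup>T * featmat d w D \<and> 0 * fro2 (Z' * W') = 0 * fro2 (Z * W)"
    using B W F by (intro bexI[of _ "B\<^sup>T * W"]) auto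
qed

lemma warp_terms_covered_featmat_eq:
  assumes F: "featmat d w' D' = featmat d w D"
    and Z: "Z \<in> carrier_mat k (featdim d w)" and Z': "Z' \<in> carrier_mat k' (featdim d w)"
    and gram: "Z'\<^sup>T * Z' = Z\<^sup>T * Z"
  shows "warp_terms_covered d \<mu> w D Z w' D' Z'"
proof -
  have "featdim d w' = featdim d w" using arg_cong[OF F, of dim_row] by simp
  then show ?thesis
    unfolding warp_terms_covered_def using F fro2_mult_eq_if_gram_eq[OF Z' Z _ gram] by auto
qed

lemma cost3_transfer:
  assumes cov: "\<forall>i<n. warp_terms_covered d (\<mu> i) (w i) (D i) (Z i) (w' i) (D' i) (Z' i)"
    and fW: "feasible3 d m n w \<Lambda> W S"
  shows "\<exists>W'. feasible3 d m n w' \<Lambda> W' S \<and>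
    cost3 d n w' D' \<Gamma> \<mu> Z' \<nu> W' S = cost3 d n w D \<Gamma> \<mu> Z \<nu> W S"
proof -
  have "\<exists>W'. W' \<in> carrier_mat (featdim d (w' i)) d \<and>
      W'\<^sup>T * featmat d (w' i) (D' i) = (W i)\<^sup>T * featmat d (w i) (D i) \<and>
      \<mu> i * fro2 (Z' i * W') = \<mu> i * fro2 (Z i * W i)" if i: "i < n" for i
  proof -
    have "W i \<in> carrier_mat (featdim d (w i)) d" using fW i unfolding feasible3_def by blast
    then show ?thesis using cov i unfolding warp_terms_covered_def by blast
  qed
  then obtain W' where W': "\<forall>i\<in>{..<n}. W' i \<in> carrier_mat (featdim d (w' i)) d \<and>
      (W' i)\<^sup>T * featmat d (w' i) (D' i) = (W i)\<^sup>T * featmat d (w i) (D i) \<and>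
      \<mu> i * fro2 (Z' i * W' i) = \<mu> i * fro2 (Z i * W i)"
    using bchoice[of "{..<n}"] by (metis lessThan_iff)
  have "feasible3 d m n w' \<Lambda> W' S" using W' fW unfolding feasible3_def by auto
  moreover have "cost3 d n w' D' \<Gamma> \<mu> Z' \<nu> W' S = cost3 d n w D \<Gamma> \<mu> Z \<nu> W S"
  proof -
    have "(\<Sum>i<n. fro2 ((W' i)\<^sup>T * featmat d (w' i) (D' i) * \<Gamma> i - S * \<Gamma> i))
        = (\<Sum>i<n. fro2 ((W i)\<^sup>T * featmat d (w i) (D i) * \<Gamma> i - S * \<Gamma> i))"
      using W' by (intro sum.cong) auto
    moreover have "(\<Sum>i<n. \<mu> i * fro2 (Z' i * W' i)) = (\<Sum>i<n. \<mu> i * fro2 (Z i * W i))"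
      using W' by (intro sum.cong) auto
    ultimately show ?thesis unfolding cost3_def by simp
  qed
  ultimately show ?thesis by blast
qed

lemma opt_shapes3_eq_if_terms_covered:
  assumes "\<forall>i<n. warp_terms_covered d (\<mu> i) (w i) (D i) (Z i) (w' i) (D' i) (Z' i)"
    and "\<forall>i<n. warp_terms_covered d (\<mu> i) (w' i) (D' i) (Z' i) (w i) (D i) (Z i)"
  shows "opt_shapes3 d m n w' D' \<Gamma> \<mu> Z' \<nu> \<Lambda> = opt_shapes3 d m n w D \<Gamma> \<mu> Z \<nu> \<Lambda>"
  unfolding opt_shapes3_def
  by (intro equalityI minimiser_components_subset)
    (blast intro: cost3_transfer[OF assms(1)] cost3_transfer[OF assms(2)])+

lemma rigid_motion_terms_covered:
  assumes R: "R \<in> carrier_mat d d" and orth: "R\<^sup>T * R = 1\<^sub>m d"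
    and t: "t \<in> carrier_vec d" and D: "D \<in> carrier_mat d m"
    and affine: "w = Affine \<Longrightarrow> \<mu> = 0"
    and tps: "\<And>C lam. w = TPS C lam \<Longrightarrow>
      C \<in> carrier_mat d (dim_col C) \<and> invertible_mat (tps_K d C lam) \<and>
      invertible_mat (tps_Ct d C * minv (tps_K d C lam) * (tps_Ct d C)\<^sup>T) \<and>
      psd Z \<and> Z * Z = tps_Ebar d C lam \<and> psd Z' \<and> Z' * Z' = tps_Ebar d (rigid R t C) lam"
  shows "warp_terms_covered d \<mu> w D Z (warp_rigid R t w) (rigid R t D) Z' \<and>
    warp_terms_covered d \<mu> (warp_rigid R t w) (rigid R t D) Z' w D Z"
proof (cases w)
  case Affine
  define A where "A = homog_mat d R t"
  have A: "A \<in> carrier_mat (d+1) (d+1)"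
    and Ai: "minv A \<in> carrier_mat (d+1) (d+1)" "minv A * A = 1\<^sub>m (d+1)"
    unfolding A_def
    using homog_mat_carrier[OF R] minv_homog_mat[OF R det_nonzero_if_orthogonal[OF R orth]] by auto
  have F: "featmat d Affine (rigid R t D) = A * featmat d Affine D"
    unfolding A_def by (rule featmat_Affine_rigid[OF R t D])
  have F_back: "featmat d Affine D = minv A * featmat d Affine (rigid R t D)"
    unfolding F using A Ai D featmat_carrier[of d Affine D]
    by (simp flip: assoc_mult_mat[of _ "d+1" "d+1"])
  have "warp_terms_covered d 0 Affine D Z Affine (rigid R t D) Z'"
    by (rule warp_terms_covered_featmat_factor[OF _ F_back]) (use Ai(1) in simp)
  moreover have "warp_terms_covered d 0 Affine (rigid R t D) Z' Affine D Z"
    by (rule warp_terms_covered_featmat_factor[OF _ F]) (use A in simp)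
  ultimately show ?thesis
    using Affine affine by simp
next
  case (TPS C lam)
  define l where "l = dim_col C"
  have C: "C \<in> carrier_mat d l" and K: "invertible_mat (tps_K d C lam)"
    and M: "invertible_mat (tps_Ct d C * minv (tps_K d C lam) * (tps_Ct d C)\<^sup>T)"
    and Z: "psd Z" "Z * Z = tps_Ebar d C lam"
    and Z'_rigid: "psd Z'" "Z' * Z' = tps_Ebar d (rigid R t C) lam"
    using tps[OF TPS] unfolding l_def by auto
  have Z': "psd Z'" "Z' * Z' = tps_Ebar d C lam"
    using Z'_rigid tps_Ebar_rigid[OF R orth t C K M] by simp_all
  note Eb = tps_Ebar_carrier[OF R orth t C K M]
  have F: "featmat d (TPS (rigid R t C) lam) (rigid R t D) = featmat d (TPS C lam) D"
    by (rule featmat_tps_rigid[OF R orth t C K M D])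
  have dims: "featdim d (TPS C lam) = l" "featdim d (TPS (rigid R t C) lam) = l"
    using C by (simp_all add: rigid_def)
  show ?thesis
    using warp_terms_covered_featmat_eq[OF F, of Z l Z' l]
      warp_terms_covered_featmat_eq[OF F[symmetric], of Z' l Z l]
      psd_square_root_gram[OF Z Eb] psd_square_root_gram[OF Z' Eb] TPS dims
    by simp
qed

theorem proposition10:
  fixes d m n :: nat
    and w :: "nat \<Rightarrow> warp"
    and D \<Gamma> Z Z' R :: "nat \<Rightarrow> real mat"
    and t :: "nat \<Rightarrow> real vec"
    and \<mu> :: "nat \<Rightarrow> real"
    and \<nu> :: real
    and \<Lambda> :: "real mat"
  assumes d23: "d = 2 \<or> d = 3"
    and D_dim: "\<forall>i<n. D i \<in> carrier_mat d m"
    and Gamma: "\<forall>i<n. \<Gamma> i \<in> carrier_mat m m \<and> diagonal_mat (\<Gamma> i) \<and>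
                   (\<forall>j<m. \<Gamma> i $$ (j,j) = 0 \<or> \<Gamma> i $$ (j,j) = 1)"
    and Lambda: "\<Lambda> \<in> carrier_mat d d" "diagonal_mat \<Lambda>"
    and nu: "\<nu> \<ge> 0"
    and affine: "\<forall>i<n. w i = Affine \<longrightarrow> \<mu> i = 0"
    and tps: "\<forall>i<n. \<forall>C lam. w i = TPS C lam \<longrightarrow>
                \<mu> i \<ge> 0 \<and> C \<in> carrier_mat d (dim_col C) \<and>
                invertible_mat (tps_K d C lam) \<and>
                invertible_mat (tps_Ct d C * minv (tps_K d C lam) * (tps_Ct d C)\<^sup>T) \<and>
                psd (Z i) \<and> Z i * Z i = tps_Ebar d C lam \<and>
                psd (Z' i) \<and> Z' i * Z' i = tps_Ebar d (rigid (R i) (t i) C) lam"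
    and inv: "\<forall>i<n. invertible_mat
                (featmat d (w i) (D i) * \<Gamma> i * \<Gamma> i * (featmat d (w i) (D i))\<^sup>T
                 + \<mu> i \<cdot>\<^sub>m ((Z i)\<^sup>T * Z i))"
    and rot: "\<forall>i<n. rotation_mat d (R i)"
    and trans: "\<forall>i<n. t i \<in> carrier_vec d"
  shows "opt_shapes3 d m n (\<lambda>i. warp_rigid (R i) (t i) (w i)) (\<lambda>i. rigid (R i) (t i) (D i))
            \<Gamma> \<mu> Z' \<nu> \<Lambda>
         = opt_shapes3 d m n w D \<Gamma> \<mu> Z \<nu> \<Lambda>"
proof (rule opt_shapes3_eq_if_terms_covered)
  have "warp_terms_covered d (\<mu> i) (w i) (D i) (Z i)
          (warp_rigid (R i) (t i) (w i)) (rigid (R i) (t i) (D i)) (Z' i) \<and>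
        warp_terms_covered d (\<mu> i) (warp_rigid (R i) (t i) (w i)) (rigid (R i) (t i) (D i)) (Z' i)
          (w i) (D i) (Z i)" if i: "i < n" for i
    using rot trans D_dim affine tps i unfolding rotation_mat_def
    by (intro rigid_motion_terms_covered) blast+
  then show "\<forall>i<n. warp_terms_covered d (\<mu> i) (w i) (D i) (Z i)
          (warp_rigid (R i) (t i) (w i)) (rigid (R i) (t i) (D i)) (Z' i)"
    and "\<forall>i<n. warp_terms_covered d (\<mu> i) (warp_rigid (R i) (t i) (w i)) (rigid (R i) (t i) (D i))
          (Z' i) (w i) (D i) (Z i)"
    by blast+
qed

end
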